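(* Let $f\colon\mathbb{R}^d\to\mathbb{R}\cup\{\infty\}$ be a lower semicontinuous convex function, let $Q\subseteq\mathbb{R}^d$ be a nonempty closed convex set contained in the domain of $f$, and assume the set $X^*$ of minimizers of $f$ over $Q$ is nonempty, with minimum value $f^*$. Suppose $f$ has $\mu$-quadratic growth for some $\mu>0$: $f(x)\ge f^*+\frac{\mu}{2}\mathrm{dist}(x,X^* )^2$ for all $x\in Q$. Let $g(x;\xi)$ be a stochastic subgradient oracle with $\mathbb{E}_{\xi\sim D}\,g(x;\xi)\in\partial f(x)$ for all $x\in Q$, and suppose there are constants $L_0,L_1\ge0$ with $$\mathbb{E}_\xi\|g(x;\xi)\|^2\le L_0^2+L_1(f(x)-f^* )\qquad\text{for all }x\in Q.$$ Let $x_0\in Q$ and consider $x_{k+1}=P_Q(x_k-\alpha_kg(x_k;\xi_k))$ with $\xi_k\sim D$ i.i.d. and $$\alpha_k=\frac{4}{\mu(k+2)+\frac{4L_1^2}{\mu(k+1)}}.$$ Then for every $T\ge0$, $$\mathbb{E}_{\xi_{0\dots T}}\left[f\left(\frac{\sum_{k=0}^T(k+1)(1-L_1\alpha_k)x_k}{\sum_{k=0}^T(k+1)(1-L_1\alpha_k)}\right)-f^*\right]\le\frac{4L_0^2(T+1)+L_1^2\,\mathrm{dist}(x_0,X^* )^2}{\mu\sum_{k=0}^T(k+1)(1-L_1\alpha_k)}.$$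
   Context: $\mathrm{dist}(x,X^* )$ is the Euclidean distance from $x$ to $X^*$. $P_Q$ is orthogonal projection onto $Q$; $\partial f(x)=\{g: f(y)\ge f(x)+g^T(y-x)\ \forall y\in\mathbb{R}^d\}$; $\mathbb{E}_{\xi_{0\dots T}}$ is expectation over the i.i.d. samples $\xi_0,\dots,\xi_T$. *)

theory Defs
  imports "HOL-Analysis.Analysis" "HOL-Probability.Probability"
begin

definition ereal_convex :: "('a::real_vector \<Rightarrow> ereal) \<Rightarrow> bool" where
  "ereal_convex f \<longleftrightarrow>
     (\<forall>x y. \<forall>t::real. 0 \<le> t \<and> t \<le> 1 \<longrightarrow>
        f ((1 - t) *\<^sub>R x + t *\<^sub>R y) \<le> ereal (1 - t) * f x + ereal t * f y)"

definition ereal_lsc :: "('a::topological_space \<Rightarrow> ereal) \<Rightarrow> bool" where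
  "ereal_lsc f \<longleftrightarrow> (\<forall>c. closed {x. f x \<le> c})"

definition subdiff :: "('a::real_inner \<Rightarrow> ereal) \<Rightarrow> 'a \<Rightarrow> 'a set" where
  "subdiff f x = {g. \<forall>y. f y \<ge> f x + ereal (inner g (y - x))}"

primrec psgd :: "'a::euclidean_space set \<Rightarrow> ('a \<Rightarrow> 'b \<Rightarrow> 'a) \<Rightarrow> (nat \<Rightarrow> real) \<Rightarrow> 'a
                 \<Rightarrow> (nat \<Rightarrow> 'b) \<Rightarrow> nat \<Rightarrow> 'a" where
  "psgd Q g \<alpha> x0 \<omega> 0 = x0"
| "psgd Q g \<alpha> x0 \<omega> (Suc k) =
     closest_point Q (psgd Q g \<alpha> x0 \<omega> k - \<alpha> k *\<^sub>R g (psgd Q g \<alpha> x0 \<omega> k) (\<omega> k))"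

end

theory Submission
  imports Defs
begin

text \<open>Put \<open>w\<^sub>k = (k+1)(1 - L\<^sub>1\<alpha>\<^sub>k)\<close> and \<open>c\<^sub>k = \<mu>k(k+1)/4 + L\<^sub>1\<^sup>2/\<mu>\<close>. Expanding
  \<open>\<parallel>x\<^sub>k - \<alpha>\<^sub>k g - p\<parallel>\<^sup>2\<close> for the nearest minimizer \<open>p\<close> of \<open>x\<^sub>k\<close> (projection is nonexpansive),
  and bounding the cross term by the subgradient inequality, the second moment by the growth
  condition on the oracle and the leftover gap by quadratic growth, gives
  \<open>w\<^sub>k E[f(x\<^sub>k) - f\<^sup>*] + c\<^sub>k\<^sub>+\<^sub>1 E dist(x\<^sub>k\<^sub>+\<^sub>1, X\<^sup>*)\<^sup>2 \<le> c\<^sub>k E dist(x\<^sub>k, X\<^sup>*)\<^sup>2 + (k+1)\<alpha>\<^sub>k L\<^sub>0\<^sup>2\<close>;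
  the step size is exactly the one for which the distance coefficients match up. Summing
  telescopes, \<open>(k+1)\<alpha>\<^sub>k \<le> 4/\<mu>\<close> bounds the noise, and Jensen's inequality for \<open>f\<close> passes the
  bound on \<open>\<Sum> w\<^sub>k E[f(x\<^sub>k) - f\<^sup>*]\<close> to the weighted average.\<close>

lemma psgd_in_set:
  assumes "closed Q" "Q \<noteq> {}" "x0 \<in> Q"
  shows "psgd Q g \<alpha> x0 \<omega> k \<in> Q"
  using assms by (cases k) (auto intro: closest_point_in_set)

lemma psgd_cong:
  "(\<And>i. i < k \<Longrightarrow> \<omega> i = \<omega>' i) \<Longrightarrow> psgd Q g \<alpha> x0 \<omega> k = psgd Q g \<alpha> x0 \<omega>' k"
  by (induction k) auto

lemma measurable_psgd:
  assumes g_meas: "(\<lambda>(x, \<xi>). g x \<xi>) \<in> borel_measurable (borel \<Otimes>\<^sub>M D)"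
    and Q: "convex Q" "closed Q" "Q \<noteq> {}"
    and J: "{..<k} \<subseteq> J"
  shows "(\<lambda>\<omega>. psgd Q g \<alpha> x0 \<omega> k) \<in> borel_measurable (PiM J (\<lambda>_. D))"
  using J
proof (induction k)
  case 0
  then show ?case by simp
next
  case (Suc k)
  then have kJ: "k \<in> J" and "{..<k} \<subseteq> J" by auto
  with Suc.IH have IH: "(\<lambda>\<omega>. psgd Q g \<alpha> x0 \<omega> k) \<in> borel_measurable (PiM J (\<lambda>_. D))"
    by blast
  have "(\<lambda>\<omega>. (psgd Q g \<alpha> x0 \<omega> k, \<omega> k)) \<in> measurable (PiM J (\<lambda>_. D)) (borel \<Otimes>\<^sub>M D)"
    using IH measurable_component_singleton[OF kJ] by (rule measurable_Pair)
  from measurable_comp[OF this g_meas]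
  have "(\<lambda>\<omega>. g (psgd Q g \<alpha> x0 \<omega> k) (\<omega> k)) \<in> borel_measurable (PiM J (\<lambda>_. D))"
    by (simp add: comp_def)
  with IH have "(\<lambda>\<omega>. psgd Q g \<alpha> x0 \<omega> k - \<alpha> k *\<^sub>R g (psgd Q g \<alpha> x0 \<omega> k) (\<omega> k))
      \<in> borel_measurable (PiM J (\<lambda>_. D))"
    by measurable
  then show ?case
    by (simp add: borel_measurable_continuous_on[OF continuous_on_closest_point[OF Q]])
qed

lemma product_prob_space_const: "prob_space D \<Longrightarrow> product_prob_space (\<lambda>_. D)"
  by (simp add: product_prob_space_def product_sigma_finite_def product_prob_space_axioms_def
      prob_space_imp_sigma_finite)

lemma nn_integral_PiM_restrict:
  fixes D :: "'b measure"
  assumes D: "prob_space D" and J: "finite J"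
    and F: "F \<in> borel_measurable (PiM J (\<lambda>_. D))"
    and dep: "\<And>\<omega>. F \<omega> = F (restrict \<omega> J)"
  shows "(\<integral>\<^sup>+\<omega>. F \<omega> \<partial>(PiM UNIV (\<lambda>_. D))) = (\<integral>\<^sup>+\<omega>. F \<omega> \<partial>(PiM J (\<lambda>_. D)))"
proof -
  interpret product_prob_space "\<lambda>_. D" UNIV using product_prob_space_const[OF D] by simp
  have distr: "distr (PiM UNIV (\<lambda>_. D)) (PiM J (\<lambda>_. D)) (\<lambda>x. restrict x J) = PiM J (\<lambda>_. D)"
    using distr_PiM_restrict_finite[OF J] by simp
  with F have "F \<in> borel_measurable (distr (PiM UNIV (\<lambda>_. D)) (PiM J (\<lambda>_. D)) (\<lambda>x. restrict x J))"
    by simp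
  from nn_integral_distr[OF measurable_restrict_subset[OF subset_UNIV] this] distr
  have "(\<integral>\<^sup>+\<omega>. F \<omega> \<partial>(PiM J (\<lambda>_. D))) = (\<integral>\<^sup>+\<omega>. F (restrict \<omega> J) \<partial>(PiM UNIV (\<lambda>_. D)))"
    by simp
  then show ?thesis using dep by simp
qed

text \<open>The iterate \<open>x\<^sub>k\<close> depends only on \<open>\<xi>\<^sub>0, \<dots>, \<xi>\<^sub>k\<^sub>-\<^sub>1\<close>, so the fresh sample \<open>\<xi>\<^sub>k\<close>
  can be integrated out first.\<close>
lemma nn_integral_psgd_fresh_sample:
  fixes D :: "'b measure" and H :: "'a::euclidean_space \<Rightarrow> 'b \<Rightarrow> ennreal"
  assumes D: "prob_space D"
    and g_meas: "(\<lambda>(x, \<xi>). g x \<xi>) \<in> borel_measurable (borel \<Otimes>\<^sub>M D)"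
    and Q: "convex Q" "closed Q" "Q \<noteq> {}"
    and H: "(\<lambda>(x,\<xi>). H x \<xi>) \<in> borel_measurable (borel \<Otimes>\<^sub>M D)"
  shows "(\<integral>\<^sup>+\<omega>. H (psgd Q g \<alpha> x0 \<omega> k) (\<omega> k) \<partial>(PiM UNIV (\<lambda>_. D)))
       = (\<integral>\<^sup>+\<omega>. (\<integral>\<^sup>+\<xi>. H (psgd Q g \<alpha> x0 \<omega> k) \<xi> \<partial>D) \<partial>(PiM UNIV (\<lambda>_. D)))"
proof -
  interpret product_prob_space "\<lambda>_. D" UNIV using product_prob_space_const[OF D] by simp
  let ?X = "\<lambda>\<omega>. psgd Q g \<alpha> x0 \<omega> k"
  have X: "\<And>J. {..<k} \<subseteq> J \<Longrightarrow> ?X \<in> borel_measurable (PiM J (\<lambda>_. D))"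
    using measurable_psgd[OF g_meas Q] by blast
  have ins: "{..k} = insert k {..<k}" by auto
  have F: "(\<lambda>\<omega>. H (?X \<omega>) (\<omega> k)) \<in> borel_measurable (PiM {..k} (\<lambda>_. D))"
  proof -
    have "(\<lambda>\<omega>. (?X \<omega>, \<omega> k)) \<in> measurable (PiM {..k} (\<lambda>_. D)) (borel \<Otimes>\<^sub>M D)"
      by (rule measurable_Pair[OF X measurable_component_singleton]) auto
    from measurable_comp[OF this H] show ?thesis by (simp add: comp_def)
  qed
  have G: "(\<lambda>\<omega>. \<integral>\<^sup>+\<xi>. H (?X \<omega>) \<xi> \<partial>D) \<in> borel_measurable (PiM {..<k} (\<lambda>_. D))"
  proof -
    have "(\<lambda>(\<omega>,\<xi>). (?X \<omega>, \<xi>)) \<in> measurable (PiM {..<k} (\<lambda>_. D) \<Otimes>\<^sub>M D) (borel \<Otimes>\<^sub>M D)"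
      using measurable_Pair[OF measurable_comp[OF measurable_fst X[OF order_refl]] measurable_snd]
      by (simp add: comp_def case_prod_beta')
    from measurable_comp[OF this H]
    have "(\<lambda>(\<omega>,\<xi>). H (?X \<omega>) \<xi>) \<in> borel_measurable (PiM {..<k} (\<lambda>_. D) \<Otimes>\<^sub>M D)"
      by (simp add: comp_def case_prod_beta')
    then show ?thesis
      by (rule sigma_finite_measure.borel_measurable_nn_integral[OF prob_space_imp_sigma_finite[OF D]])
  qed
  have "(\<integral>\<^sup>+\<omega>. H (?X \<omega>) (\<omega> k) \<partial>(PiM UNIV (\<lambda>_. D)))
      = (\<integral>\<^sup>+\<omega>. H (?X \<omega>) (\<omega> k) \<partial>(PiM (insert k {..<k}) (\<lambda>_. D)))"
    unfolding ins[symmetric]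
    by (rule nn_integral_PiM_restrict[OF D _ F]) (auto intro!: arg_cong2[where f=H] psgd_cong)
  also have "\<dots> = (\<integral>\<^sup>+x. (\<integral>\<^sup>+y. H (?X (x(k := y))) ((x(k:=y)) k) \<partial>D) \<partial>(PiM {..<k} (\<lambda>_. D)))"
    by (rule product_nn_integral_insert) (use F in \<open>auto simp: ins\<close>)
  also have "\<dots> = (\<integral>\<^sup>+x. (\<integral>\<^sup>+y. H (?X x) y \<partial>D) \<partial>(PiM {..<k} (\<lambda>_. D)))"
    by (intro nn_integral_cong arg_cong2[where f=H] psgd_cong) auto
  also have "\<dots> = (\<integral>\<^sup>+\<omega>. (\<integral>\<^sup>+\<xi>. H (?X \<omega>) \<xi> \<partial>D) \<partial>(PiM UNIV (\<lambda>_. D)))"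
    by (rule nn_integral_PiM_restrict[OF D _ G, symmetric])
       (auto intro!: nn_integral_cong arg_cong2[where f=H] psgd_cong)
  finally show ?thesis .
qed

lemma nn_integral_norm_sq_diff_le:
  fixes g :: "'b \<Rightarrow> 'a::euclidean_space"
  assumes D: "prob_space D" and gm: "g \<in> borel_measurable D" and gi: "integrable D g"
    and mom: "(\<integral>\<^sup>+\<xi>. ennreal ((norm (g \<xi>))\<^sup>2) \<partial>D) \<le> ennreal M2" and M2: "0 \<le> M2"
  shows "(\<integral>\<^sup>+\<xi>. ennreal ((norm (v - a *\<^sub>R g \<xi>))\<^sup>2) \<partial>D)
           \<le> ennreal ((norm v)\<^sup>2 - 2 * a * (v \<bullet> integral\<^sup>L D g) + a\<^sup>2 * M2)"
    and "0 \<le> (norm v)\<^sup>2 - 2 * a * (v \<bullet> integral\<^sup>L D g) + a\<^sup>2 * M2"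
proof -
  interpret prob_space D by (rule D)
  have sq_int: "integrable D (\<lambda>\<xi>. (norm (g \<xi>))\<^sup>2)"
  proof (rule integrableI_bounded)
    show "(\<lambda>\<xi>. (norm (g \<xi>))\<^sup>2) \<in> borel_measurable D" using gm by measurable
    show "(\<integral>\<^sup>+\<xi>. ennreal (norm ((norm (g \<xi>))\<^sup>2)) \<partial>D) < \<infinity>"
      using mom by (simp add: le_less_trans)
  qed
  define m where "m = (\<integral>\<xi>. (norm (g \<xi>))\<^sup>2 \<partial>D)"
  have "ennreal m = (\<integral>\<^sup>+\<xi>. ennreal ((norm (g \<xi>))\<^sup>2) \<partial>D)"
    unfolding m_def using sq_int by (intro nn_integral_eq_integral[symmetric]) auto
  with mom have "ennreal m \<le> ennreal M2" by simp
  with M2 have m_le: "m \<le> M2" using ennreal_le_iff by blast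
  define h where "h \<xi> = (norm v)\<^sup>2 - 2 * a * (v \<bullet> g \<xi>) + a\<^sup>2 * (norm (g \<xi>))\<^sup>2" for \<xi>
  have norm_eq: "(norm (v - a *\<^sub>R g \<xi>))\<^sup>2 = h \<xi>" for \<xi>
  proof -
    have "(norm (v - a *\<^sub>R g \<xi>))\<^sup>2 = v \<bullet> v - 2 * a * (v \<bullet> g \<xi>) + (a * a) * (g \<xi> \<bullet> g \<xi>)"
      by (simp add: power2_norm_eq_inner inner_commute algebra_simps)
    then show ?thesis
      by (simp only: h_def dot_square_norm) (simp add: power2_eq_square)
  qed
  have h_int: "integrable D h"
    unfolding h_def using sq_int gi by (intro Bochner_Integration.integrable_add
        Bochner_Integration.integrable_diff integrable_mult_right) auto
  have h_integral: "integral\<^sup>L D h = (norm v)\<^sup>2 - 2 * a * (v \<bullet> integral\<^sup>L D g) + a\<^sup>2 * m"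
    unfolding h_def m_def using sq_int gi
    by (subst Bochner_Integration.integral_add, (auto)[2],
        subst Bochner_Integration.integral_diff, (auto)[2])
       (simp add: prob_space)
  have h_nonneg: "0 \<le> h \<xi>" for \<xi> using norm_eq[of \<xi>, symmetric] by simp
  have mono: "a\<^sup>2 * m \<le> a\<^sup>2 * M2" using m_le by (simp add: mult_left_mono)
  have "(\<integral>\<^sup>+\<xi>. ennreal ((norm (v - a *\<^sub>R g \<xi>))\<^sup>2) \<partial>D) = ennreal (integral\<^sup>L D h)"
    unfolding norm_eq using h_int h_nonneg by (intro nn_integral_eq_integral) auto
  also have "\<dots> \<le> ennreal ((norm v)\<^sup>2 - 2 * a * (v \<bullet> integral\<^sup>L D g) + a\<^sup>2 * M2)"
    unfolding h_integral using mono by (intro ennreal_leI) linarith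
  finally show "(\<integral>\<^sup>+\<xi>. ennreal ((norm (v - a *\<^sub>R g \<xi>))\<^sup>2) \<partial>D)
           \<le> ennreal ((norm v)\<^sup>2 - 2 * a * (v \<bullet> integral\<^sup>L D g) + a\<^sup>2 * M2)" .
  have "0 \<le> integral\<^sup>L D h" using h_nonneg by (intro integral_nonneg_AE) auto
  then show "0 \<le> (norm v)\<^sup>2 - 2 * a * (v \<bullet> integral\<^sup>L D g) + a\<^sup>2 * M2"
    unfolding h_integral using mono by linarith
qed

lemma step_descent_inequality:
  fixes K a e s d L0 L1 \<mu> :: real
  assumes K: "K > 0" and a: "a > 0" and s: "e \<le> s"
    and qg: "\<mu> / 2 * d\<^sup>2 \<le> e"
  shows "K * (1 - L1 * a) * e + (K / a) * (d\<^sup>2 - 2 * a * s + a\<^sup>2 * (L0\<^sup>2 + L1 * e))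
         \<le> K * (1 / a - \<mu> / 2) * d\<^sup>2 + K * a * L0\<^sup>2"
proof -
  have "K * (1 - L1 * a) * e + (K / a) * (d\<^sup>2 - 2 * a * s + a\<^sup>2 * (L0\<^sup>2 + L1 * e))
      = K * d\<^sup>2 / a - 2 * K * s + K * e + K * a * L0\<^sup>2"
    using a by (simp add: field_simps power2_eq_square)
  also have "\<dots> \<le> K * d\<^sup>2 / a - K * e + K * a * L0\<^sup>2"
    using K s by simp
  also have "\<dots> \<le> K * d\<^sup>2 / a - K * (\<mu> / 2 * d\<^sup>2) + K * a * L0\<^sup>2"
    using K qg by (simp add: mult_left_mono)
  also have "\<dots> = K * (1 / a - \<mu> / 2) * d\<^sup>2 + K * a * L0\<^sup>2"
    by (simp add: algebra_simps)
  finally show ?thesis .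
qed

lemma telescoping_sum_le:
  fixes e u b :: "nat \<Rightarrow> 'a::ordered_comm_monoid_add"
  assumes "\<And>k. e k + u (Suc k) \<le> u k + b k"
  shows "(\<Sum>k<n. e k) + u n \<le> u 0 + (\<Sum>k<n. b k)"
proof (induction n)
  case 0
  then show ?case by simp
next
  case (Suc n)
  have "(\<Sum>k<Suc n. e k) + u (Suc n) = (\<Sum>k<n. e k) + (e n + u (Suc n))"
    by (simp add: add.assoc)
  also have "\<dots> \<le> (\<Sum>k<n. e k) + (u n + b n)"
    by (rule add_left_mono[OF assms])
  also have "\<dots> = ((\<Sum>k<n. e k) + u n) + b n"
    by (simp add: add.assoc)
  also have "\<dots> \<le> (u 0 + (\<Sum>k<n. b k)) + b n"
    by (rule add_right_mono[OF Suc.IH])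
  also have "\<dots> = u 0 + (\<Sum>k<Suc n. b k)"
    by (simp add: add.assoc)
  finally show ?case .
qed

lemma convex_on_weighted_average:
  fixes x :: "'i \<Rightarrow> 'a::real_vector"
  assumes F: "convex_on C F" and S: "finite S"
    and w: "\<And>i. i \<in> S \<Longrightarrow> 0 \<le> w i" and W: "0 < sum w S"
    and x: "\<And>i. i \<in> S \<Longrightarrow> x i \<in> C"
  shows "F ((1 / sum w S) *\<^sub>R (\<Sum>i\<in>S. w i *\<^sub>R x i)) \<le> (\<Sum>i\<in>S. w i * F (x i)) / sum w S"
proof -
  have "S \<noteq> {}" using W by auto
  moreover have "(\<Sum>i\<in>S. w i / sum w S) = 1"
    using W by (simp add: sum_divide_distrib[symmetric])
  ultimately have "F (\<Sum>i\<in>S. (w i / sum w S) *\<^sub>R x i) \<le> (\<Sum>i\<in>S. (w i / sum w S) * F (x i))"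
    using W w x by (intro convex_on_sum[OF S _ F]) auto
  then show ?thesis
    by (simp add: scaleR_sum_right sum_divide_distrib)
qed

definition qg_step_size :: "real \<Rightarrow> real \<Rightarrow> nat \<Rightarrow> real" where
  "qg_step_size \<mu> L1 k = 4 / (\<mu> * (real k + 2) + 4 * L1\<^sup>2 / (\<mu> * (real k + 1)))"

definition qg_dist_weight :: "real \<Rightarrow> real \<Rightarrow> nat \<Rightarrow> real" where
  "qg_dist_weight \<mu> L1 k = \<mu> * real k * (real k + 1) / 4 + L1\<^sup>2 / \<mu>"

lemma inverse_qg_step_size:
  assumes "0 < \<mu>"
  shows "1 / qg_step_size \<mu> L1 k = \<mu> * (real k + 2) / 4 + L1\<^sup>2 / (\<mu> * (real k + 1))"
  using assms by (simp add: qg_step_size_def field_simps)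

lemma qg_step_size_pos: "0 < \<mu> \<Longrightarrow> 0 < qg_step_size \<mu> L1 k"
  unfolding qg_step_size_def by (intro divide_pos_pos add_pos_nonneg) auto

lemma qg_step_size_L1_less:
  assumes \<mu>: "0 < \<mu>"
  shows "L1 * qg_step_size \<mu> L1 k < 1"
proof -
  define t where "t = \<mu> * (real k + 1)"
  have t: "t > 0" using \<mu> by (simp add: t_def)
  have "0 \<le> (t / 2 - L1)\<^sup>2 / t" using t by simp
  also have "(t / 2 - L1)\<^sup>2 / t = t / 4 + L1\<^sup>2 / t - L1"
    using t by (simp add: field_simps power2_eq_square)
  finally have "L1 < 1 / qg_step_size \<mu> L1 k"
    using \<mu> unfolding inverse_qg_step_size[OF \<mu>] t_def by (simp add: field_simps)
  then show ?thesis
    using qg_step_size_pos[OF \<mu>, of L1 k] by (simp add: field_simps)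
qed

lemma qg_step_size_mult_le:
  assumes \<mu>: "0 < \<mu>"
  shows "(real k + 1) * qg_step_size \<mu> L1 k \<le> 4 / \<mu>"
proof -
  have "\<mu> * (real k + 1) / 4 \<le> \<mu> * (real k + 2) / 4" using \<mu> by simp
  also have "\<dots> \<le> 1 / qg_step_size \<mu> L1 k"
    unfolding inverse_qg_step_size[OF \<mu>] using \<mu> by (simp add: zero_le_divide_iff)
  finally have "\<mu> * (real k + 1) / 4 \<le> 1 / qg_step_size \<mu> L1 k" .
  then show ?thesis
    using \<mu> qg_step_size_pos[OF \<mu>, of L1 k] by (simp add: field_simps)
qed

text \<open>The step size is tuned so that the two weights the distance term acquires in consecutive
  steps coincide, which makes the one-step bounds telescope.\<close>
lemma qg_dist_weight_Suc:
  assumes \<mu>: "0 < \<mu>"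
  shows "qg_dist_weight \<mu> L1 (Suc k) = (real k + 1) / qg_step_size \<mu> L1 k"
proof -
  define t where "t = real k + 1"
  have "0 < t" and k2: "real k + 2 = t + 1" by (simp_all add: t_def)
  then have "t * (1 / qg_step_size \<mu> L1 k) = \<mu> * t * (t + 1) / 4 + L1\<^sup>2 / \<mu>"
    unfolding inverse_qg_step_size[OF \<mu>] k2 t_def[symmetric] using \<mu>
    by (simp add: field_simps)
  then show ?thesis
    by (simp add: qg_dist_weight_def t_def ac_simps)
qed

lemma qg_dist_weight_eq:
  assumes \<mu>: "0 < \<mu>"
  shows "qg_dist_weight \<mu> L1 k = (real k + 1) * (1 / qg_step_size \<mu> L1 k - \<mu> / 2)"
proof -
  define t where "t = real k + 1"
  have "0 < t" and k2: "real k + 2 = t + 1" by (simp_all add: t_def)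
  then have "t * (1 / qg_step_size \<mu> L1 k - \<mu> / 2) = \<mu> * (t - 1) * t / 4 + L1\<^sup>2 / \<mu>"
    unfolding inverse_qg_step_size[OF \<mu>] k2 t_def[symmetric] using \<mu>
    by (simp add: field_simps)
  then show ?thesis
    by (simp add: qg_dist_weight_def t_def)
qed

lemma qg_dist_weight_nonneg: "0 < \<mu> \<Longrightarrow> 0 \<le> qg_dist_weight \<mu> L1 k"
  by (simp add: qg_dist_weight_def)

locale quadratic_growth_psgd =
  fixes f :: "'a::euclidean_space \<Rightarrow> ereal"
    and Q Xstar :: "'a set"
    and fstar \<mu> L0 L1 :: real
    and D :: "'b measure"
    and g :: "'a \<Rightarrow> 'b \<Rightarrow> 'a"
    and x0 :: 'a
  assumes proper: "\<forall>x. f x \<noteq> -\<infinity>"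
    and lsc: "ereal_lsc f"
    and cvx: "ereal_convex f"
    and Q_ne: "Q \<noteq> {}" and Q_closed: "closed Q" and Q_convex: "convex Q"
    and Q_dom: "\<forall>x\<in>Q. f x < \<infinity>"
    and Xstar_eq: "Xstar = {x\<in>Q. \<forall>y\<in>Q. f x \<le> f y}"
    and Xstar_ne: "Xstar \<noteq> {}"
    and fstar: "\<forall>x\<in>Xstar. f x = ereal fstar"
    and mu_pos: "\<mu> > 0"
    and qgrowth: "\<forall>x\<in>Q. f x \<ge> ereal (fstar + \<mu> / 2 * (infdist x Xstar)\<^sup>2)"
    and D_prob: "prob_space D"
    and g_meas: "(\<lambda>(x, \<xi>). g x \<xi>) \<in> borel_measurable (borel \<Otimes>\<^sub>M D)"
    and g_int: "\<forall>x\<in>Q. integrable D (g x)"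
    and g_unbiased: "\<forall>x\<in>Q. (\<integral>\<xi>. g x \<xi> \<partial>D) \<in> subdiff f x"
    and L1_nonneg: "L1 \<ge> 0"
    and g_second_moment: "\<forall>x\<in>Q. (\<integral>\<^sup>+ \<xi>. ennreal ((norm (g x \<xi>))\<^sup>2) \<partial>D)
                          \<le> ennreal (L0\<^sup>2 + L1 * (real_of_ereal (f x) - fstar))"
    and x0_Q: "x0 \<in> Q"
begin

definition fval :: "'a \<Rightarrow> real" where "fval x = real_of_ereal (f x)"

abbreviation stepsize :: "nat \<Rightarrow> real" where "stepsize \<equiv> qg_step_size \<mu> L1"

abbreviation avg_weight :: "nat \<Rightarrow> real" where "avg_weight k \<equiv> (real k + 1) * (1 - L1 * stepsize k)"

abbreviation dist_weight :: "nat \<Rightarrow> real" where "dist_weight \<equiv> qg_dist_weight \<mu> L1"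

abbreviation X :: "nat \<Rightarrow> (nat \<Rightarrow> 'b) \<Rightarrow> 'a" where "X k \<omega> \<equiv> psgd Q g stepsize x0 \<omega> k"

abbreviation paths :: "(nat \<Rightarrow> 'b) measure" where "paths \<equiv> \<Pi>\<^sub>M i\<in>(UNIV::nat set). D"

lemma f_eq_fval: "x \<in> Q \<Longrightarrow> f x = ereal (fval x)"
  using proper Q_dom by (cases "f x") (auto simp: fval_def)

lemma closed_Xstar: "closed Xstar"
proof -
  obtain p where p: "p \<in> Xstar" using Xstar_ne by auto
  have "Xstar = Q \<inter> {x. f x \<le> ereal fstar}"
  proof
    show "Xstar \<subseteq> Q \<inter> {x. f x \<le> ereal fstar}"
      using fstar Xstar_eq by auto
    show "Q \<inter> {x. f x \<le> ereal fstar} \<subseteq> Xstar"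
    proof
      fix x assume x: "x \<in> Q \<inter> {x. f x \<le> ereal fstar}"
      have "f x \<le> f y" if "y \<in> Q" for y
      proof -
        have "f x \<le> f p" using x p fstar by simp
        also have "\<dots> \<le> f y" using p that Xstar_eq by blast
        finally show ?thesis .
      qed
      with x show "x \<in> Xstar" using Xstar_eq by blast
    qed
  qed
  then show ?thesis
    using Q_closed lsc by (auto simp: ereal_lsc_def)
qed

lemma fval_quadratic_growth: "x \<in> Q \<Longrightarrow> fstar + \<mu> / 2 * (infdist x Xstar)\<^sup>2 \<le> fval x"
  using qgrowth f_eq_fval by fastforce

lemma fval_gap_nonneg: "x \<in> Q \<Longrightarrow> 0 \<le> fval x - fstar"
proof -
  assume "x \<in> Q"
  moreover have "0 \<le> \<mu> / 2 * (infdist x Xstar)\<^sup>2" using mu_pos by simp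
  ultimately show ?thesis using fval_quadratic_growth[of x] by linarith
qed

lemma fval_gap_le_inner:
  assumes x: "x \<in> Q" and p: "p \<in> Xstar"
  shows "fval x - fstar \<le> (x - p) \<bullet> (\<integral>\<xi>. g x \<xi> \<partial>D)"
proof -
  have "f p \<ge> f x + ereal ((\<integral>\<xi>. g x \<xi> \<partial>D) \<bullet> (p - x))"
    using g_unbiased x by (auto simp: subdiff_def)
  then show ?thesis
    using fstar p f_eq_fval[OF x] by (simp add: inner_diff_left inner_diff_right inner_commute)
qed

lemma convex_on_fval: "convex_on Q fval"
proof (rule convex_onI[OF _ Q_convex])
  fix t :: real and x y assume t: "0 < t" "t < 1" and xy: "x \<in> Q" "y \<in> Q"
  then have z: "(1 - t) *\<^sub>R x + t *\<^sub>R y \<in> Q"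
    using Q_convex by (simp add: convex_alt)
  moreover have "f ((1 - t) *\<^sub>R x + t *\<^sub>R y) \<le> ereal (1 - t) * f x + ereal t * f y"
    using cvx t unfolding ereal_convex_def by auto
  ultimately show "fval ((1 - t) *\<^sub>R x + t *\<^sub>R y) \<le> (1 - t) * fval x + t * fval y"
    using f_eq_fval[OF xy(1)] f_eq_fval[OF xy(2)] f_eq_fval[OF z] by simp
qed

lemma infdist_closest_point_le:
  assumes p: "p \<in> Xstar"
  shows "infdist (closest_point Q y) Xstar \<le> dist y p"
proof -
  have "p \<in> Q" using p Xstar_eq by blast
  have "infdist (closest_point Q y) Xstar \<le> dist (closest_point Q y) (closest_point Q p)"
    using infdist_le[OF p] closest_point_self[OF \<open>p \<in> Q\<close>] by simp
  also have "\<dots> \<le> dist y p"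
    by (rule closest_point_lipschitz[OF Q_convex Q_closed Q_ne])
  finally show ?thesis .
qed

lemma borel_measurable_fval: "fval \<in> borel_measurable borel"
proof -
  have "f \<in> borel_measurable borel"
    by (rule borel_measurableI_le) (use lsc in \<open>auto simp: ereal_lsc_def\<close>)
  then show ?thesis unfolding fval_def by measurable
qed

lemma measurable_step_sq_dist:
  "(\<lambda>(x, \<xi>). ennreal ((infdist (closest_point Q (x - a *\<^sub>R g x \<xi>)) Xstar)\<^sup>2))
     \<in> borel_measurable (borel \<Otimes>\<^sub>M D)"
proof -
  have "(\<lambda>p. fst p - a *\<^sub>R g (fst p) (snd p)) \<in> borel_measurable (borel \<Otimes>\<^sub>M D)"
    using g_meas by (simp add: case_prod_beta') measurable
  moreover have "continuous_on UNIV (\<lambda>y. (infdist (closest_point Q y) Xstar)\<^sup>2)"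
    by (intro continuous_on_power continuous_on_compose2[OF continuous_on_infdist]
        continuous_on_closest_point[OF Q_convex Q_closed Q_ne] continuous_on_id) auto
  ultimately have "(\<lambda>p. (infdist (closest_point Q (fst p - a *\<^sub>R g (fst p) (snd p))) Xstar)\<^sup>2)
      \<in> borel_measurable (borel \<Otimes>\<^sub>M D)"
    by (rule borel_measurable_continuous_on[rotated])
  then show ?thesis by (simp add: case_prod_beta') measurable
qed

lemma psgd_in_Q: "X k \<omega> \<in> Q"
  by (rule psgd_in_set[OF Q_closed Q_ne x0_Q])

lemma measurable_psgd_paths: "(\<lambda>\<omega>. X k \<omega>) \<in> borel_measurable paths"
  by (rule measurable_psgd[OF g_meas Q_convex Q_closed Q_ne]) simp

lemma avg_weight_pos: "0 < avg_weight k"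
  using qg_step_size_L1_less[OF mu_pos, of L1 k] by simp

lemma borel_measurable_weighted_gap:
  "(\<lambda>\<omega>. ennreal (avg_weight k * (fval (X k \<omega>) - fstar))) \<in> borel_measurable paths"
  using measurable_comp[OF measurable_psgd_paths borel_measurable_fval] by (simp add: comp_def)

lemma borel_measurable_sq_dist:
  "(\<lambda>\<omega>. ennreal ((infdist (X k \<omega>) Xstar)\<^sup>2)) \<in> borel_measurable paths"
proof -
  have "(\<lambda>\<omega>. (infdist (X k \<omega>) Xstar)\<^sup>2) \<in> borel_measurable paths"
    by (rule borel_measurable_continuous_on[OF _ measurable_psgd_paths])
       (intro continuous_on_power continuous_on_infdist continuous_on_id; simp)
  then show ?thesis by measurable
qed

text \<open>The one-step estimate, conditioned on \<open>x\<^sub>k = x\<close>: the subgradient inequality at a nearest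
  minimizer \<open>p\<close> controls the cross term, quadratic growth the remaining gap.\<close>
lemma expected_step_bound:
  assumes x: "x \<in> Q"
  shows "(\<integral>\<^sup>+\<xi>. ennreal (avg_weight k * (fval x - fstar)) + ennreal (dist_weight (Suc k))
             * ennreal ((infdist (closest_point Q (x - stepsize k *\<^sub>R g x \<xi>)) Xstar)\<^sup>2) \<partial>D)
         \<le> ennreal (dist_weight k * (infdist x Xstar)\<^sup>2 + (real k + 1) * stepsize k * L0\<^sup>2)"
proof -
  interpret D: prob_space D by (rule D_prob)
  obtain p where p: "p \<in> Xstar" and "infdist x Xstar = dist x p"
    using infdist_attains_inf[OF closed_Xstar Xstar_ne] by blast
  then have dp: "infdist x Xstar = norm (x - p)" by (simp add: dist_norm)
  define e where "e = fval x - fstar"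
  define s where "s = (x - p) \<bullet> (\<integral>\<xi>. g x \<xi> \<partial>D)"
  define Z where "Z = (norm (x - p))\<^sup>2 - 2 * stepsize k * s + (stepsize k)\<^sup>2 * (L0\<^sup>2 + L1 * e)"
  define h where "h \<xi> = ennreal ((infdist (closest_point Q (x - stepsize k *\<^sub>R g x \<xi>)) Xstar)\<^sup>2)" for \<xi>
  have e_nonneg: "0 \<le> e" unfolding e_def by (rule fval_gap_nonneg[OF x])
  have gx: "g x \<in> borel_measurable D" using measurable_Pair2[OF g_meas, of x] by simp
  have gi: "integrable D (g x)" using g_int x by blast
  have mom: "(\<integral>\<^sup>+\<xi>. ennreal ((norm (g x \<xi>))\<^sup>2) \<partial>D) \<le> ennreal (L0\<^sup>2 + L1 * e)"
    using g_second_moment x unfolding e_def fval_def by blast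
  have "0 \<le> L0\<^sup>2 + L1 * e" using e_nonneg L1_nonneg by simp
  note sq_step = nn_integral_norm_sq_diff_le[OF D_prob gx gi mom this, of "x - p" "stepsize k"]
  have "h \<xi> \<le> ennreal ((norm (x - p - stepsize k *\<^sub>R g x \<xi>))\<^sup>2)" for \<xi>
  proof -
    have "infdist (closest_point Q (x - stepsize k *\<^sub>R g x \<xi>)) Xstar \<le> dist (x - stepsize k *\<^sub>R g x \<xi>) p"
      by (rule infdist_closest_point_le[OF p])
    also have "\<dots> = norm (x - p - stepsize k *\<^sub>R g x \<xi>)"
      by (simp add: dist_norm algebra_simps)
    finally show ?thesis
      unfolding h_def by (intro ennreal_leI power_mono[OF _ infdist_nonneg])
  qed
  then have "integral\<^sup>N D h \<le> (\<integral>\<^sup>+\<xi>. ennreal ((norm (x - p - stepsize k *\<^sub>R g x \<xi>))\<^sup>2) \<partial>D)"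
    by (rule nn_integral_mono)
  also have "\<dots> \<le> ennreal Z" unfolding Z_def s_def by (rule sq_step(1))
  finally have h_le: "integral\<^sup>N D h \<le> ennreal Z" .
  have h_meas: "h \<in> borel_measurable D"
    using measurable_Pair2[OF measurable_step_sq_dist, of x] unfolding h_def by simp
  have "(\<integral>\<^sup>+\<xi>. ennreal (avg_weight k * e) + ennreal (dist_weight (Suc k)) * h \<xi> \<partial>D)
      = ennreal (avg_weight k * e) + ennreal (dist_weight (Suc k)) * integral\<^sup>N D h"
    using h_meas by (simp add: nn_integral_add nn_integral_cmult D.emeasure_space_1)
  also have "\<dots> \<le> ennreal (avg_weight k * e) + ennreal (dist_weight (Suc k)) * ennreal Z"
    by (intro add_left_mono mult_left_mono h_le) simp
  also have "\<dots> = ennreal (avg_weight k * e + dist_weight (Suc k) * Z)"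
  proof -
    have "0 \<le> avg_weight k * e" using avg_weight_pos[of k] e_nonneg by simp
    moreover have "0 \<le> dist_weight (Suc k)" by (rule qg_dist_weight_nonneg[OF mu_pos])
    moreover have "0 \<le> Z" unfolding Z_def s_def by (rule sq_step(2))
    ultimately show ?thesis by (simp add: ennreal_mult)
  qed
  also have "\<dots> \<le> ennreal (dist_weight k * (infdist x Xstar)\<^sup>2 + (real k + 1) * stepsize k * L0\<^sup>2)"
  proof (rule ennreal_leI)
    have K: "0 < real k + 1" by simp
    have a: "0 < stepsize k" by (rule qg_step_size_pos[OF mu_pos])
    have gap: "e \<le> s" unfolding e_def s_def by (rule fval_gap_le_inner[OF x p])
    have qg: "\<mu> / 2 * (norm (x - p))\<^sup>2 \<le> e"
      using fval_quadratic_growth[OF x] unfolding e_def dp by linarith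
    show "avg_weight k * e + dist_weight (Suc k) * Z
        \<le> dist_weight k * (infdist x Xstar)\<^sup>2 + (real k + 1) * stepsize k * L0\<^sup>2"
      using step_descent_inequality[OF K a gap qg, of L1 L0]
      unfolding Z_def qg_dist_weight_Suc[OF mu_pos] qg_dist_weight_eq[OF mu_pos, of L1 k] dp .
  qed
  finally show ?thesis unfolding e_def h_def .
qed

definition weighted_expected_gap :: "nat \<Rightarrow> ennreal" where
  "weighted_expected_gap k = (\<integral>\<^sup>+\<omega>. ennreal (avg_weight k * (fval (X k \<omega>) - fstar)) \<partial>paths)"

definition expected_sq_dist :: "nat \<Rightarrow> ennreal" where
  "expected_sq_dist k = (\<integral>\<^sup>+\<omega>. ennreal ((infdist (X k \<omega>) Xstar)\<^sup>2) \<partial>paths)"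

lemma expected_descent:
  "weighted_expected_gap k + ennreal (dist_weight (Suc k)) * expected_sq_dist (Suc k)
     \<le> ennreal (dist_weight k) * expected_sq_dist k + ennreal ((real k + 1) * stepsize k * L0\<^sup>2)"
proof -
  interpret paths: prob_space paths by (rule prob_space_PiM) (rule D_prob)
  define H where "H x \<xi> = ennreal (avg_weight k * (fval x - fstar)) + ennreal (dist_weight (Suc k))
      * ennreal ((infdist (closest_point Q (x - stepsize k *\<^sub>R g x \<xi>)) Xstar)\<^sup>2)" for x \<xi>
  have "(\<lambda>p. H (fst p) (snd p)) \<in> borel_measurable (borel \<Otimes>\<^sub>M D)"
    using measurable_step_sq_dist[of "stepsize k", unfolded case_prod_beta'] borel_measurable_fval
    unfolding H_def by measurable
  then have H_meas: "(\<lambda>(x, \<xi>). H x \<xi>) \<in> borel_measurable (borel \<Otimes>\<^sub>M D)"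
    by (simp add: case_prod_beta')
  have "weighted_expected_gap k + ennreal (dist_weight (Suc k)) * expected_sq_dist (Suc k)
      = (\<integral>\<^sup>+\<omega>. H (X k \<omega>) (\<omega> k) \<partial>paths)"
    unfolding weighted_expected_gap_def expected_sq_dist_def H_def
    by (subst nn_integral_add)
       (use borel_measurable_weighted_gap borel_measurable_sq_dist[of "Suc k"] in
        \<open>auto simp: nn_integral_cmult\<close>)
  also have "\<dots> = (\<integral>\<^sup>+\<omega>. (\<integral>\<^sup>+\<xi>. H (X k \<omega>) \<xi> \<partial>D) \<partial>paths)"
    by (rule nn_integral_psgd_fresh_sample[OF D_prob g_meas Q_convex Q_closed Q_ne H_meas])
  also have "\<dots> \<le> (\<integral>\<^sup>+\<omega>. ennreal (dist_weight k) * ennreal ((infdist (X k \<omega>) Xstar)\<^sup>2)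
      + ennreal ((real k + 1) * stepsize k * L0\<^sup>2) \<partial>paths)"
    using qg_dist_weight_nonneg[OF mu_pos, of L1 k] qg_step_size_pos[OF mu_pos, of L1 k]
    unfolding H_def
    by (intro nn_integral_mono order_trans[OF expected_step_bound[OF psgd_in_Q]])
       (simp add: ennreal_mult)
  also have "\<dots> = ennreal (dist_weight k) * expected_sq_dist k + ennreal ((real k + 1) * stepsize k * L0\<^sup>2)"
    unfolding expected_sq_dist_def using borel_measurable_sq_dist[of k]
    by (subst nn_integral_add) (auto simp: nn_integral_cmult paths.emeasure_space_1)
  finally show ?thesis .
qed

lemma sum_weighted_expected_gap_le:
  "(\<Sum>k\<le>T. weighted_expected_gap k)
     \<le> ennreal ((4 * L0\<^sup>2 * (real T + 1) + L1\<^sup>2 * (infdist x0 Xstar)\<^sup>2) / \<mu>)"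
proof -
  interpret paths: prob_space paths by (rule prob_space_PiM) (rule D_prob)
  have "(\<Sum>k\<le>T. weighted_expected_gap k)
      \<le> (\<Sum>k<Suc T. weighted_expected_gap k) + ennreal (dist_weight (Suc T)) * expected_sq_dist (Suc T)"
    by (simp add: lessThan_Suc_atMost)
  also have "\<dots> \<le> ennreal (dist_weight 0) * expected_sq_dist 0
      + (\<Sum>k<Suc T. ennreal ((real k + 1) * stepsize k * L0\<^sup>2))"
    by (rule telescoping_sum_le[of weighted_expected_gap "\<lambda>k. ennreal (dist_weight k) * expected_sq_dist k"])
       (rule expected_descent)
  also have "\<dots> = ennreal (L1\<^sup>2 / \<mu> * (infdist x0 Xstar)\<^sup>2 + (\<Sum>k\<le>T. (real k + 1) * stepsize k * L0\<^sup>2))"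
  proof -
    have "expected_sq_dist 0 = ennreal ((infdist x0 Xstar)\<^sup>2)"
      by (simp add: expected_sq_dist_def paths.emeasure_space_1)
    moreover have "(\<Sum>k<Suc T. ennreal ((real k + 1) * stepsize k * L0\<^sup>2))
        = ennreal (\<Sum>k\<le>T. (real k + 1) * stepsize k * L0\<^sup>2)"
      using qg_step_size_pos[OF mu_pos] by (simp add: lessThan_Suc_atMost less_imp_le)
    moreover have "ennreal (dist_weight 0) * ennreal ((infdist x0 Xstar)\<^sup>2)
        = ennreal (L1\<^sup>2 / \<mu> * (infdist x0 Xstar)\<^sup>2)"
      using mu_pos by (simp add: qg_dist_weight_def ennreal_mult'[symmetric])
    moreover have "0 \<le> (\<Sum>k\<le>T. (real k + 1) * stepsize k * L0\<^sup>2)"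
      using qg_step_size_pos[OF mu_pos] by (simp add: sum_nonneg less_imp_le)
    ultimately show ?thesis
      using mu_pos by simp
  qed
  also have "\<dots> \<le> ennreal ((4 * L0\<^sup>2 * (real T + 1) + L1\<^sup>2 * (infdist x0 Xstar)\<^sup>2) / \<mu>)"
  proof (rule ennreal_leI)
    have "(\<Sum>k\<le>T. (real k + 1) * stepsize k * L0\<^sup>2) \<le> of_nat (card {..T}) * (4 / \<mu> * L0\<^sup>2)"
      using qg_step_size_mult_le[OF mu_pos] by (intro sum_bounded_above mult_right_mono) auto
    moreover have "(4 * L0\<^sup>2 * (real T + 1) + L1\<^sup>2 * (infdist x0 Xstar)\<^sup>2) / \<mu>
        = L1\<^sup>2 / \<mu> * (infdist x0 Xstar)\<^sup>2 + of_nat (card {..T}) * (4 / \<mu> * L0\<^sup>2)"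
      using mu_pos by (simp add: field_simps)
    ultimately show "L1\<^sup>2 / \<mu> * (infdist x0 Xstar)\<^sup>2 + (\<Sum>k\<le>T. (real k + 1) * stepsize k * L0\<^sup>2)
        \<le> (4 * L0\<^sup>2 * (real T + 1) + L1\<^sup>2 * (infdist x0 Xstar)\<^sup>2) / \<mu>"
      by linarith
  qed
  finally show ?thesis .
qed

lemma gap_at_weighted_average_le:
  "ennreal (fval ((1 / (\<Sum>k\<le>T. avg_weight k)) *\<^sub>R (\<Sum>k\<le>T. avg_weight k *\<^sub>R X k \<omega>)) - fstar)
     \<le> ennreal (1 / (\<Sum>k\<le>T. avg_weight k)) * (\<Sum>k\<le>T. ennreal (avg_weight k * (fval (X k \<omega>) - fstar)))"
proof -
  define w where "w k = avg_weight k" for k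
  define W where "W = (\<Sum>k\<le>T. w k)"
  have w: "0 < w k" for k unfolding w_def by (rule avg_weight_pos)
  have W: "0 < W" unfolding W_def by (intro sum_pos w) auto
  have "fval ((1 / W) *\<^sub>R (\<Sum>k\<le>T. w k *\<^sub>R X k \<omega>)) \<le> (\<Sum>k\<le>T. w k * fval (X k \<omega>)) / W"
    unfolding W_def
    by (rule convex_on_weighted_average[OF convex_on_fval]) (use W w psgd_in_Q in \<open>auto simp: W_def less_imp_le\<close>)
  also have "\<dots> = fstar + (\<Sum>k\<le>T. w k * (fval (X k \<omega>) - fstar)) / W"
  proof -
    have "(\<Sum>k\<le>T. w k * (fval (X k \<omega>) - fstar)) = (\<Sum>k\<le>T. w k * fval (X k \<omega>)) - W * fstar"
      by (simp add: W_def right_diff_distrib sum_subtractf sum_distrib_right)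
    then show ?thesis using W by (simp add: field_simps)
  qed
  finally have "ennreal (fval ((1 / W) *\<^sub>R (\<Sum>k\<le>T. w k *\<^sub>R X k \<omega>)) - fstar)
      \<le> ennreal (1 / W * (\<Sum>k\<le>T. w k * (fval (X k \<omega>) - fstar)))"
    by (intro ennreal_leI) simp
  also have "\<dots> = ennreal (1 / W) * ennreal (\<Sum>k\<le>T. w k * (fval (X k \<omega>) - fstar))"
    using W by (intro ennreal_mult') simp
  also have "\<dots> = ennreal (1 / W) * (\<Sum>k\<le>T. ennreal (w k * (fval (X k \<omega>) - fstar)))"
  proof -
    have "0 \<le> w k * (fval (X k \<omega>) - fstar)" for k
      using w[of k] fval_gap_nonneg[OF psgd_in_Q] by simp
    then show ?thesis by simp
  qed
  finally show ?thesis unfolding W_def w_def .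
qed

theorem expected_gap_at_weighted_average_le:
  "(\<integral>\<^sup>+\<omega>. ennreal (fval ((1 / (\<Sum>k\<le>T. avg_weight k)) *\<^sub>R (\<Sum>k\<le>T. avg_weight k *\<^sub>R X k \<omega>))
      - fstar) \<partial>paths)
     \<le> ennreal ((4 * L0\<^sup>2 * (real T + 1) + L1\<^sup>2 * (infdist x0 Xstar)\<^sup>2) / (\<mu> * (\<Sum>k\<le>T. avg_weight k)))"
proof -
  define W where "W = (\<Sum>k\<le>T. avg_weight k)"
  have W: "0 < W" unfolding W_def by (intro sum_pos avg_weight_pos) auto
  have "(\<integral>\<^sup>+\<omega>. ennreal (fval ((1 / W) *\<^sub>R (\<Sum>k\<le>T. avg_weight k *\<^sub>R X k \<omega>)) - fstar) \<partial>paths)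
      \<le> (\<integral>\<^sup>+\<omega>. ennreal (1 / W) * (\<Sum>k\<le>T. ennreal (avg_weight k * (fval (X k \<omega>) - fstar))) \<partial>paths)"
    unfolding W_def by (intro nn_integral_mono gap_at_weighted_average_le)
  also have "\<dots> = ennreal (1 / W) * (\<Sum>k\<le>T. weighted_expected_gap k)"
    unfolding weighted_expected_gap_def using borel_measurable_weighted_gap
    by (subst nn_integral_cmult) (auto simp: nn_integral_sum)
  also have "\<dots> \<le> ennreal (1 / W) * ennreal ((4 * L0\<^sup>2 * (real T + 1) + L1\<^sup>2 * (infdist x0 Xstar)\<^sup>2) / \<mu>)"
    by (intro mult_left_mono sum_weighted_expected_gap_le) auto
  also have "\<dots> = ennreal ((4 * L0\<^sup>2 * (real T + 1) + L1\<^sup>2 * (infdist x0 Xstar)\<^sup>2) / (\<mu> * W))"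
    using W by (simp add: ennreal_mult'[symmetric] mult.commute)
  finally show ?thesis unfolding W_def .
qed

end

theorem theorem4p1:
  fixes f :: "'a::euclidean_space \<Rightarrow> ereal"
    and Q Xstar :: "'a set"
    and fstar \<mu> L0 L1 :: real
    and D :: "'b measure"
    and g :: "'a \<Rightarrow> 'b \<Rightarrow> 'a"
    and x0 :: 'a
    and \<alpha> :: "nat \<Rightarrow> real"
    and T :: nat
  assumes proper: "\<forall>x. f x \<noteq> -\<infinity>"
    and lsc: "ereal_lsc f"
    and cvx: "ereal_convex f"
    and Q_ne: "Q \<noteq> {}" and Q_closed: "closed Q" and Q_convex: "convex Q"
    and Q_dom: "\<forall>x\<in>Q. f x < \<infinity>"
    and Xstar_def: "Xstar = {x\<in>Q. \<forall>y\<in>Q. f x \<le> f y}"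
    and Xstar_ne: "Xstar \<noteq> {}"
    and fstar_def: "\<forall>x\<in>Xstar. f x = ereal fstar"
    and mu_pos: "\<mu> > 0"
    and qgrowth: "\<forall>x\<in>Q. f x \<ge> ereal (fstar + \<mu> / 2 * (infdist x Xstar)\<^sup>2)"
    and D_prob: "prob_space D"
    and g_meas: "(\<lambda>(x, \<xi>). g x \<xi>) \<in> borel_measurable (borel \<Otimes>\<^sub>M D)"
    and g_int: "\<forall>x\<in>Q. integrable D (g x)"
    and g_unbiased: "\<forall>x\<in>Q. (\<integral>\<xi>. g x \<xi> \<partial>D) \<in> subdiff f x"
    and L0_nonneg: "L0 \<ge> 0" and L1_nonneg: "L1 \<ge> 0"
    and g_second_moment: "\<forall>x\<in>Q. (\<integral>\<^sup>+ \<xi>. ennreal ((norm (g x \<xi>))\<^sup>2) \<partial>D)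
                          \<le> ennreal (L0\<^sup>2 + L1 * (real_of_ereal (f x) - fstar))"
    and x0_Q: "x0 \<in> Q"
    and step: "\<forall>k. \<alpha> k = 4 / (\<mu> * (real k + 2) + 4 * L1\<^sup>2 / (\<mu> * (real k + 1)))"
  shows "(\<integral>\<^sup>+ \<omega>. ennreal (real_of_ereal
            (f ((1 / (\<Sum>k\<le>T. (real k + 1) * (1 - L1 * \<alpha> k))) *\<^sub>R
                (\<Sum>k\<le>T. ((real k + 1) * (1 - L1 * \<alpha> k)) *\<^sub>R psgd Q g \<alpha> x0 \<omega> k))) - fstar)
          \<partial>(\<Pi>\<^sub>M i\<in>(UNIV::nat set). D))
       \<le> ennreal ((4 * L0\<^sup>2 * (real T + 1) + L1\<^sup>2 * (infdist x0 Xstar)\<^sup>2)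
                  / (\<mu> * (\<Sum>k\<le>T. (real k + 1) * (1 - L1 * \<alpha> k))))"
proof -
  interpret quadratic_growth_psgd f Q Xstar fstar \<mu> L0 L1 D g x0
    by (rule quadratic_growth_psgd.intro) (fact assms)+
  have "\<alpha> = qg_step_size \<mu> L1"
    using step by (auto simp: qg_step_size_def)
  with expected_gap_at_weighted_average_le[of T] show ?thesis
    unfolding fval_def by simp
qed

end
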